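(* The set of CDFs of univariate Gaussian mixtures $x\mapsto\sum_{j=1}^n p_j\Phi\!\left(\frac{x-\mu_j}{\sigma_j}\right)$, with $n\in\mathbb{N}^+$, $p_j\ge 0$, $\sum_j p_j=1$, $\mu_j\in\mathbb{R}$, $\sigma_j>0$, is dense in the metric space $(L^2_{\mathrm{CDF}},l_2)$.
   Context: $\Phi(x)=\int_{-\infty}^x \frac{1}{\sqrt{2\pi}}e^{-y^2/2}\,dy$ is the standard normal CDF. A CDF is a function $F:\mathbb{R}\to[0,1]$ that is right-continuous, non-decreasing, with limits $0$ at $-\infty$ and $1$ at $+\infty$. $H$ is the Heaviside function ($H(x)=0$ for $x<0$, $H(x)=1$ for $x\ge0$). $L^2_{\mathrm{CDF}}=\{F\text{ a CDF}: |F-H|\in L^2(\mathbb{R})\}$ and $l_2(F_1,F_2)=\left(\int_{\mathbb{R}}|F_1-F_2|^2dx\right)^{1/2}$. *)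

theory Defs
  imports "HOL-Analysis.Analysis"
begin

definition Phi :: "real \<Rightarrow> real" where
  "Phi x = (LBINT y:{..x}. (1 / sqrt (2 * pi)) * exp (- y\<^sup>2 / 2))"

definition is_CDF :: "(real \<Rightarrow> real) \<Rightarrow> bool" where
  "is_CDF F \<longleftrightarrow> (\<forall>x. 0 \<le> F x \<and> F x \<le> 1) \<and> mono F \<and>
     (\<forall>a. continuous (at_right a) F) \<and>
     (F \<longlongrightarrow> 0) at_bot \<and> (F \<longlongrightarrow> 1) at_top"

definition Heaviside :: "real \<Rightarrow> real" where
  "Heaviside x = (if x < 0 then 0 else 1)"

definition L2_CDF :: "(real \<Rightarrow> real) set" where
  "L2_CDF = {F. is_CDF F \<and> (\<lambda>x. F x - Heaviside x) \<in> borel_measurable lborel \<and>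
                 integrable lborel (\<lambda>x. (F x - Heaviside x)\<^sup>2)}"

definition l2 :: "(real \<Rightarrow> real) \<Rightarrow> (real \<Rightarrow> real) \<Rightarrow> real" where
  "l2 F1 F2 = sqrt (LINT x|lborel. (F1 x - F2 x)\<^sup>2)"

definition gauss_mix_CDFs :: "(real \<Rightarrow> real) set" where
  "gauss_mix_CDFs = {G. \<exists>n::nat. \<exists>p \<mu> \<sigma> :: nat \<Rightarrow> real. n \<ge> 1 \<and>
      (\<forall>j<n. p j \<ge> 0 \<and> \<sigma> j > 0) \<and> (\<Sum>j<n. p j) = 1 \<and>
      G = (\<lambda>x. \<Sum>j<n. p j * Phi ((x - \<mu> j) / \<sigma> j))}"

end

theory Submission
  imports Defs "HOL-Probability.Probability" "HOL-Real_Asymp.Real_Asymp"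
begin

(* A CDF F with F - H in L^2 is approximated in L^2 by a finite mixture of unit steps
   H(x - t_k) on a uniform grid of [-R, R], weighted by the increments of F along the grid:
   the squared error is at most the L^2 tail of F - H outside [-R, R] plus the mesh.
   The substitution x = mu + sigma y shows that replacing a step H(x - mu) by
   Phi((x - mu)/sigma) costs exactly sigma * ||Phi - H||^2, and Jensen's inequality for
   squares carries both estimates over to mixtures; then let sigma -> 0.
   Gaussian mixtures lie in L2_CDF by the same convexity, invariance under increasing
   affine changes of variable, and Chebyshev's inequality for the standard normal. *)

lemma Heaviside_borel [measurable]: "Heaviside \<in> borel_measurable borel"
  unfolding Heaviside_def by measurable

lemma is_CDF_borel_measurable: "is_CDF F \<Longrightarrow> F \<in> borel_measurable borel"
  unfolding is_CDF_def by (intro borel_measurable_mono) auto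

lemma L2_CDF_is_CDF: "F \<in> L2_CDF \<Longrightarrow> is_CDF F"
  and L2_CDF_integrable: "F \<in> L2_CDF \<Longrightarrow> integrable lborel (\<lambda>x. (F x - Heaviside x)\<^sup>2)"
  unfolding L2_CDF_def by auto

lemma is_CDF_cdf:
  assumes "real_distribution M" shows "is_CDF (cdf M)"
proof -
  interpret real_distribution M by (fact assms)
  show ?thesis
    unfolding is_CDF_def
    by (auto intro!: monoI cdf_nonneg cdf_bounded_prob cdf_nondecreasing cdf_is_right_cont
        cdf_lim_at_bot cdf_lim_at_top_prob)
qed

lemma cdf_minus_Heaviside_le_second_moment:
  fixes M :: "real measure"
  assumes M: "real_distribution M" and m2: "integrable M (\<lambda>x. x\<^sup>2)" and "y \<noteq> 0"
  shows "\<bar>cdf M y - Heaviside y\<bar> \<le> (\<integral>x. x\<^sup>2 \<partial>M) / y\<^sup>2"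
proof -
  interpret real_distribution M by (fact M)
  have "measure M {x. \<bar>y\<bar> \<le> \<bar>x\<bar>} \<le> (\<integral>x. x\<^sup>2 \<partial>M) / \<bar>y\<bar>\<^sup>2"
    using second_moment_method[of id "\<bar>y\<bar>"] m2 \<open>y \<noteq> 0\<close> by simp
  moreover have "\<bar>cdf M y - Heaviside y\<bar> \<le> measure M {x. \<bar>y\<bar> \<le> \<bar>x\<bar>}"
  proof (cases "y < 0")
    case True
    then have "cdf M y \<le> measure M {x. \<bar>y\<bar> \<le> \<bar>x\<bar>}"
      unfolding cdf_def by (intro finite_measure_mono) auto
    then show ?thesis using True cdf_nonneg[of y] by (simp add: Heaviside_def)
  next
    case False
    have "UNIV - {..y} = {y<..}" by auto
    then have "1 - cdf M y = measure M {y<..}"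
      unfolding cdf_def using prob_compl[of "{..y}"] by simp
    also have "\<dots> \<le> measure M {x. \<bar>y\<bar> \<le> \<bar>x\<bar>}"
      using False by (intro finite_measure_mono) auto
    finally show ?thesis using False cdf_bounded_prob[of y] by (simp add: Heaviside_def)
  qed
  ultimately show ?thesis by simp
qed

lemma le_min_one_div_square_bound:
  fixes d m y :: real
  assumes "d \<le> 1" "0 \<le> m" "y \<noteq> 0 \<Longrightarrow> d \<le> m / y\<^sup>2"
  shows "d \<le> 2 * (1 + m) / (1 + y\<^sup>2)"
proof (cases "y\<^sup>2 \<le> 1")
  case True
  then have "1 \<le> 2 * (1 + m) / (1 + y\<^sup>2)"
    using \<open>0 \<le> m\<close> by (simp add: le_divide_eq add_pos_nonneg)
  then show ?thesis using \<open>d \<le> 1\<close> by linarith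
next
  case False
  have "m * (1 + y\<^sup>2) \<le> m * (2 * y\<^sup>2)"
    using False \<open>0 \<le> m\<close> by (intro mult_left_mono) auto
  also have "\<dots> \<le> 2 * (1 + m) * y\<^sup>2"
    by (simp add: algebra_simps)
  finally have "m / y\<^sup>2 \<le> 2 * (1 + m) / (1 + y\<^sup>2)"
    using False \<open>0 \<le> m\<close> by (subst frac_le_eq) (auto simp: divide_le_0_iff add_pos_nonneg)
  moreover have "y \<noteq> 0" using False by auto
  ultimately show ?thesis using assms(3) by linarith
qed

lemma cdf_in_L2_CDF:
  fixes M :: "real measure"
  assumes M: "real_distribution M" and m2: "integrable M (\<lambda>x. x\<^sup>2)"
  shows "cdf M \<in> L2_CDF"
proof -
  interpret real_distribution M by (fact M)
  define m where "m = (\<integral>x. x\<^sup>2 \<partial>M)"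
  have "m \<ge> 0" unfolding m_def by simp
  have bound: "(cdf M y - Heaviside y)\<^sup>2 \<le> 2 * (1 + m) * inverse (1 + y\<^sup>2)" for y
  proof -
    define d where "d = \<bar>cdf M y - Heaviside y\<bar>"
    have "0 \<le> d" by (simp add: d_def)
    have "d \<le> 1" using cdf_nonneg[of y] cdf_bounded_prob[of y]
      by (auto simp: d_def Heaviside_def)
    have "(cdf M y - Heaviside y)\<^sup>2 = d\<^sup>2" by (simp add: d_def)
    also have "\<dots> \<le> d"
      using \<open>0 \<le> d\<close> \<open>d \<le> 1\<close> by (simp add: power2_eq_square mult_left_le)
    also have "d \<le> 2 * (1 + m) / (1 + y\<^sup>2)"
      using \<open>d \<le> 1\<close> \<open>m \<ge> 0\<close> cdf_minus_Heaviside_le_second_moment[OF M m2, of y]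
      by (intro le_min_one_div_square_bound) (auto simp: d_def m_def)
    finally show ?thesis by (simp add: d_def divide_inverse)
  qed
  have [measurable]: "cdf M \<in> borel_measurable borel"
    using is_CDF_cdf[OF M] by (rule is_CDF_borel_measurable)
  have "integrable lborel (\<lambda>y::real. 2 * (1 + m) * inverse (1 + y\<^sup>2))"
    using integrable_inverse_1_plus_square by (simp add: set_integrable_def)
  then have "integrable lborel (\<lambda>y. (cdf M y - Heaviside y)\<^sup>2)"
    by (rule Bochner_Integration.integrable_bound)
      (use bound order_trans[OF zero_le_power2 bound] in \<open>auto intro!: AE_I2\<close>)
  then show ?thesis
    using is_CDF_cdf[OF M] unfolding L2_CDF_def by auto
qed

definition std_normal_distribution :: "real measure" where
  "std_normal_distribution = density lborel std_normal_density"

lemma real_distribution_std_normal: "real_distribution std_normal_distribution"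
  unfolding std_normal_distribution_def real_distribution_def real_distribution_axioms_def
  by (simp add: prob_space_normal_density)

lemma Phi_eq_cdf: "Phi = cdf std_normal_distribution"
proof
  fix x
  have "cdf std_normal_distribution x
      = enn2real (\<integral>\<^sup>+ y. ennreal (indicator {..x} y * std_normal_density y) \<partial>lborel)"
    unfolding cdf_def std_normal_distribution_def measure_def
    by (auto simp: emeasure_density intro!: arg_cong[where f=enn2real] nn_integral_cong
        split: split_indicator)
  also have "\<dots> = (LINT y|lborel. indicator {..x} y * std_normal_density y)"
    using integrable_mult_indicator[of "{..x}" lborel std_normal_density]
    by (subst nn_integral_eq_integral) auto
  finally show "Phi x = cdf std_normal_distribution x"
    unfolding Phi_def set_lebesgue_integral_def std_normal_density_def by simp
qed

lemma Phi_in_L2_CDF: "Phi \<in> L2_CDF"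
proof -
  have "integrable std_normal_distribution (\<lambda>x. x\<^sup>2)"
    unfolding std_normal_distribution_def
    using integrable_std_normal_moment[of 2] by (subst integrable_density) (auto simp: mult.commute)
  then show ?thesis
    unfolding Phi_eq_cdf by (rule cdf_in_L2_CDF[OF real_distribution_std_normal])
qed

lemma is_CDF_affine:
  assumes F: "is_CDF F" and "\<sigma> > 0"
  shows "is_CDF (\<lambda>x. F ((x - \<mu>) / \<sigma>))"
proof -
  have top: "filterlim (\<lambda>x. (x - \<mu>) / \<sigma>) at_top at_top"
    using \<open>\<sigma> > 0\<close> by real_asymp
  have bot: "filterlim (\<lambda>x. (x - \<mu>) / \<sigma>) at_bot at_bot"
    using \<open>\<sigma> > 0\<close> by real_asymp
  have "continuous (at_right a) (\<lambda>x. F ((x - \<mu>) / \<sigma>))" for a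
  proof (rule continuous_within_compose2[where f = "\<lambda>x. (x - \<mu>) / \<sigma>" and g = F])
    show "continuous (at_right a) (\<lambda>x. (x - \<mu>) / \<sigma>)"
      using \<open>\<sigma> > 0\<close> by (auto intro!: continuous_intros)
    have "(\<lambda>x. (x - \<mu>) / \<sigma>) ` {a<..} = {(a - \<mu>) / \<sigma><..}"
    proof safe
      fix y assume "(a - \<mu>) / \<sigma> < y"
      then show "y \<in> (\<lambda>x. (x - \<mu>) / \<sigma>) ` {a<..}"
        using \<open>\<sigma> > 0\<close> by (intro image_eqI[of _ _ "\<sigma> * y + \<mu>"]) (auto simp: field_simps)
    qed (use \<open>\<sigma> > 0\<close> in \<open>auto simp: divide_strict_right_mono\<close>)
    then show "continuous (at ((a - \<mu>) / \<sigma>) within (\<lambda>x. (x - \<mu>) / \<sigma>) ` {a<..}) F"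
      using F by (simp add: is_CDF_def)
  qed
  moreover have "mono (\<lambda>x. F ((x - \<mu>) / \<sigma>))"
    using F \<open>\<sigma> > 0\<close> unfolding is_CDF_def by (auto intro!: monoI monoD[of F] divide_right_mono)
  ultimately show ?thesis
    using F filterlim_compose[OF _ top] filterlim_compose[OF _ bot]
    unfolding is_CDF_def by auto
qed

lemma L2_CDF_rescale_distance_to_Heaviside:
  assumes F: "F \<in> L2_CDF" and "\<sigma> > 0"
  shows "integrable lborel (\<lambda>x. (Heaviside (x - \<mu>) - F ((x - \<mu>) / \<sigma>))\<^sup>2)"
    and "(LINT x|lborel. (Heaviside (x - \<mu>) - F ((x - \<mu>) / \<sigma>))\<^sup>2)
           = \<sigma> * (LINT x|lborel. (F x - Heaviside x)\<^sup>2)"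
proof -
  define f where "f x = (Heaviside (x - \<mu>) - F ((x - \<mu>) / \<sigma>))\<^sup>2" for x
  have "Heaviside (\<sigma> * y) = Heaviside y" for y
    using \<open>\<sigma> > 0\<close> by (simp add: Heaviside_def mult_less_0_iff)
  then have rescaled: "(\<lambda>y. f (\<mu> + \<sigma> * y)) = (\<lambda>y. (F y - Heaviside y)\<^sup>2)"
    using \<open>\<sigma> > 0\<close> by (auto simp: f_def power2_commute)
  show "integrable lborel f"
    using lborel_integrable_real_affine_iff[of \<sigma> f \<mu>] \<open>\<sigma> > 0\<close> L2_CDF_integrable[OF F]
    by (simp add: rescaled)
  show "integral\<^sup>L lborel f = \<sigma> * (LINT x|lborel. (F x - Heaviside x)\<^sup>2)"
    using lborel_integral_real_affine[of \<sigma> f \<mu>] \<open>\<sigma> > 0\<close> by (simp add: rescaled)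
qed

lemma power2_diff_le_twice: "(a - c)\<^sup>2 \<le> 2 * (a - b)\<^sup>2 + 2 * (b - c)\<^sup>2" for a b c :: real
  by (smt (verit) power2_diff power2_sum zero_le_power2)

lemma L2_CDF_affine:
  assumes F: "F \<in> L2_CDF" and "\<sigma> > 0"
  shows "(\<lambda>x. F ((x - \<mu>) / \<sigma>)) \<in> L2_CDF"
proof -
  have [measurable]: "F \<in> borel_measurable borel"
    using L2_CDF_is_CDF[OF F] by (rule is_CDF_borel_measurable)
  have bound: "(F ((x - \<mu>) / \<sigma>) - Heaviside x)\<^sup>2
      \<le> 2 * (Heaviside (x - \<mu>) - F ((x - \<mu>) / \<sigma>))\<^sup>2
         + 2 * indicator {min \<mu> 0 .. max \<mu> 0} x" for x
  proof -
    have "(Heaviside (x - \<mu>) - Heaviside x)\<^sup>2 \<le> indicator {min \<mu> 0 .. max \<mu> 0} x"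
      by (auto simp: Heaviside_def indicator_def)
    moreover have "(F ((x - \<mu>) / \<sigma>) - Heaviside (x - \<mu>))\<^sup>2
        = (Heaviside (x - \<mu>) - F ((x - \<mu>) / \<sigma>))\<^sup>2"
      by (rule power2_commute)
    ultimately show ?thesis
      using power2_diff_le_twice[where a = "F ((x - \<mu>) / \<sigma>)" and b = "Heaviside (x - \<mu>)"
          and c = "Heaviside x"]
      by linarith
  qed
  have "integrable lborel (\<lambda>x. 2 * (Heaviside (x - \<mu>) - F ((x - \<mu>) / \<sigma>))\<^sup>2
      + 2 * indicator {min \<mu> 0 .. max \<mu> 0} x)"
    using L2_CDF_rescale_distance_to_Heaviside(1)[OF F \<open>\<sigma> > 0\<close>] by auto
  then have "integrable lborel (\<lambda>x. (F ((x - \<mu>) / \<sigma>) - Heaviside x)\<^sup>2)"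
    by (rule Bochner_Integration.integrable_bound)
      (use bound order_trans[OF zero_le_power2 bound] in \<open>auto intro!: AE_I2\<close>)
  then show ?thesis
    using is_CDF_affine[OF L2_CDF_is_CDF[OF F] \<open>\<sigma> > 0\<close>] unfolding L2_CDF_def by auto
qed

lemma power2_convex_sum_le:
  fixes p a :: "'i \<Rightarrow> real"
  assumes "finite I" "\<And>i. i \<in> I \<Longrightarrow> p i \<ge> 0" "sum p I = 1"
  shows "(\<Sum>i\<in>I. p i * a i)\<^sup>2 \<le> (\<Sum>i\<in>I. p i * (a i)\<^sup>2)"
proof -
  have "I \<noteq> {}" using \<open>sum p I = 1\<close> by auto
  then show ?thesis
    using convex_on_sum[OF \<open>finite I\<close> _ convex_power2, of p a] assms by simp
qed

lemma is_CDF_convex_sum: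
  assumes "finite I" "\<And>i. i \<in> I \<Longrightarrow> p i \<ge> 0" "sum p I = 1"
    and F: "\<And>i. i \<in> I \<Longrightarrow> is_CDF (F i)"
  shows "is_CDF (\<lambda>x. \<Sum>i\<in>I. p i * F i x)"
proof -
  have "(\<Sum>i\<in>I. p i * F i x) \<le> (\<Sum>i\<in>I. p i * 1)" for x
    using assms by (intro sum_mono mult_left_mono) (auto simp: is_CDF_def)
  moreover have "((\<lambda>x. \<Sum>i\<in>I. p i * F i x) \<longlongrightarrow> (\<Sum>i\<in>I. p i * 1)) at_top"
    using F by (intro tendsto_intros) (auto simp: is_CDF_def)
  moreover have "((\<lambda>x. \<Sum>i\<in>I. p i * F i x) \<longlongrightarrow> (\<Sum>i\<in>I. p i * 0)) at_bot"
    using F by (intro tendsto_intros) (auto simp: is_CDF_def)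
  moreover have "mono (\<lambda>x. \<Sum>i\<in>I. p i * F i x)"
    using assms by (intro monoI sum_mono mult_left_mono) (auto simp: is_CDF_def mono_def)
  moreover have "continuous (at_right a) (\<lambda>x. \<Sum>i\<in>I. p i * F i x)" for a
    using F by (intro continuous_intros) (auto simp: is_CDF_def)
  ultimately show ?thesis
    using assms unfolding is_CDF_def by (auto intro!: sum_nonneg)
qed

lemma L2_CDF_convex_sum:
  assumes I: "finite I" and p: "\<And>i. i \<in> I \<Longrightarrow> p i \<ge> 0" "sum p I = 1"
    and F: "\<And>i. i \<in> I \<Longrightarrow> F i \<in> L2_CDF"
  shows "(\<lambda>x. \<Sum>i\<in>I. p i * F i x) \<in> L2_CDF"
proof -
  have [measurable]: "F i \<in> borel_measurable borel" if "i \<in> I" for i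
    using L2_CDF_is_CDF[OF F[OF that]] by (rule is_CDF_borel_measurable)
  have "(\<Sum>i\<in>I. p i * F i x) - Heaviside x = (\<Sum>i\<in>I. p i * (F i x - Heaviside x))" for x
    using p by (simp add: right_diff_distrib sum_subtractf flip: sum_distrib_right)
  then have bound: "((\<Sum>i\<in>I. p i * F i x) - Heaviside x)\<^sup>2
      \<le> (\<Sum>i\<in>I. p i * (F i x - Heaviside x)\<^sup>2)" for x
    using power2_convex_sum_le[OF I p] by simp
  have "integrable lborel (\<lambda>x. \<Sum>i\<in>I. p i * (F i x - Heaviside x)\<^sup>2)"
    using F by (intro Bochner_Integration.integrable_sum integrable_mult_right L2_CDF_integrable)
  then have "integrable lborel (\<lambda>x. ((\<Sum>i\<in>I. p i * F i x) - Heaviside x)\<^sup>2)"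
    by (rule Bochner_Integration.integrable_bound)
      (use bound order_trans[OF zero_le_power2 bound] in \<open>auto intro!: AE_I2\<close>)
  then show ?thesis
    using is_CDF_convex_sum[OF I p L2_CDF_is_CDF[OF F]] unfolding L2_CDF_def by auto
qed

lemma gauss_mix_CDFs_subset_L2_CDF: "gauss_mix_CDFs \<subseteq> L2_CDF"
  unfolding gauss_mix_CDFs_def
  by (auto intro!: L2_CDF_convex_sum L2_CDF_affine Phi_in_L2_CDF)

lemma step_mixture_rescale_distance:
  fixes p \<mu> :: "'i \<Rightarrow> real"
  assumes G: "G \<in> L2_CDF" and "\<sigma> > 0"
    and I: "finite I" and p: "\<And>i. i \<in> I \<Longrightarrow> p i \<ge> 0" "sum p I = 1"
  defines "S \<equiv> \<lambda>x. \<Sum>i\<in>I. p i * Heaviside (x - \<mu> i)"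
    and "Gmix \<equiv> \<lambda>x. \<Sum>i\<in>I. p i * G ((x - \<mu> i) / \<sigma>)"
  shows "integrable lborel (\<lambda>x. (S x - Gmix x)\<^sup>2)"
    and "(LINT x|lborel. (S x - Gmix x)\<^sup>2) \<le> \<sigma> * (LINT x|lborel. (G x - Heaviside x)\<^sup>2)"
proof -
  define B where "B x = (\<Sum>i\<in>I. p i * (Heaviside (x - \<mu> i) - G ((x - \<mu> i) / \<sigma>))\<^sup>2)" for x
  have bound: "(S x - Gmix x)\<^sup>2 \<le> B x" for x
  proof -
    have "S x - Gmix x = (\<Sum>i\<in>I. p i * (Heaviside (x - \<mu> i) - G ((x - \<mu> i) / \<sigma>)))"
      by (simp add: S_def Gmix_def sum_subtractf right_diff_distrib)
    then show ?thesis
      unfolding B_def using power2_convex_sum_le[OF I p] by simp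
  qed
  have [measurable]: "G \<in> borel_measurable borel"
    using L2_CDF_is_CDF[OF G] by (rule is_CDF_borel_measurable)
  have B_integrable: "integrable lborel B"
    unfolding B_def using L2_CDF_rescale_distance_to_Heaviside(1)[OF G \<open>\<sigma> > 0\<close>] by auto
  show "integrable lborel (\<lambda>x. (S x - Gmix x)\<^sup>2)"
    by (rule Bochner_Integration.integrable_bound[OF B_integrable])
      (use bound order_trans[OF zero_le_power2 bound] in \<open>auto intro!: AE_I2 simp: S_def Gmix_def\<close>)
  have "(LINT x|lborel. (S x - Gmix x)\<^sup>2) \<le> integral\<^sup>L lborel B"
    by (rule integral_mono'[OF B_integrable bound]) (simp add: B_def p sum_nonneg)
  also have "\<dots> = (\<Sum>i\<in>I. p i * (\<sigma> * (LINT x|lborel. (G x - Heaviside x)\<^sup>2)))"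
    unfolding B_def using L2_CDF_rescale_distance_to_Heaviside[OF G \<open>\<sigma> > 0\<close>]
    by (subst Bochner_Integration.integral_sum) auto
  also have "\<dots> = \<sigma> * (LINT x|lborel. (G x - Heaviside x)\<^sup>2)"
    using p by (simp flip: sum_distrib_right)
  finally show "(LINT x|lborel. (S x - Gmix x)\<^sup>2) \<le> \<sigma> * (LINT x|lborel. (G x - Heaviside x)\<^sup>2)" .
qed

lemma integral_tail_tendsto_0:
  fixes f :: "real \<Rightarrow> real"
  assumes f: "integrable lborel f"
  shows "((\<lambda>R. LINT x|lborel. f x * indicator {x. R \<le> \<bar>x\<bar>} x) \<longlongrightarrow> 0) at_top"
proof -
  have "((\<lambda>R. LINT x|lborel. f x * indicator {x. R \<le> \<bar>x\<bar>} x) \<longlongrightarrow> (LINT (x::real)|lborel. 0)) at_top"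
  proof (rule integral_dominated_convergence_at_top[where w = "\<lambda>x. \<bar>f x\<bar>"
        and s = "\<lambda>R x. f x * indicator {x. R \<le> \<bar>x\<bar>} x" and f = "\<lambda>x. 0"])
    show "AE x in lborel. ((\<lambda>R. f x * indicator {x. R \<le> \<bar>x\<bar>} x) \<longlongrightarrow> 0) at_top"
    proof (rule AE_I2)
      fix x :: real
      have "\<forall>\<^sub>F R in at_top. f x * indicator {x. R \<le> \<bar>x\<bar>} x = 0"
        using eventually_gt_at_top[of "\<bar>x\<bar>"] by eventually_elim (auto simp: indicator_def)
      then show "((\<lambda>R. f x * indicator {x. R \<le> \<bar>x\<bar>} x) \<longlongrightarrow> 0) at_top"
        by (rule tendsto_eventually)
    qed
  qed (use f in \<open>auto simp: indicator_def\<close>)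
  then show ?thesis by simp
qed

lemma sum_Heaviside_telescope:
  fixes t c :: "nat \<Rightarrow> real"
  assumes "\<And>k. t k \<le> x \<longleftrightarrow> k < m"
  shows "(\<Sum>k<n. (c (Suc k) - c k) * Heaviside (x - t k)) = c (min m n) - c 0"
proof -
  have "(\<Sum>k<n. (c (Suc k) - c k) * Heaviside (x - t k))
      = (\<Sum>k<n. if k \<in> {..<m} then c (Suc k) - c k else 0)"
    by (intro sum.cong) (auto simp: Heaviside_def assms[symmetric])
  also have "\<dots> = (\<Sum>k\<in>{..<n} \<inter> {..<m}. c (Suc k) - c k)"
    by (rule sum.inter_restrict[symmetric]) simp
  also have "{..<n} \<inter> {..<m} = {..<min m n}"
    by auto
  also have "(\<Sum>k<min m n. c (Suc k) - c k) = c (min m n) - c 0"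
    by (rule sum_lessThan_telescope)
  finally show ?thesis .
qed

lemma CDF_minus_grid_step_le:
  fixes F :: "real \<Rightarrow> real" and t :: "nat \<Rightarrow> real" and N :: nat
  assumes F: "is_CDF F" and "R > 0" "N \<ge> 1" and t_def: "t = (\<lambda>k. - R + real k * (2 * R / N))"
  defines "c \<equiv> \<lambda>j. if j = 0 then 0 else if N < j then 1 else F (t (j - 1))"
    \<comment> \<open>the value of the step mixture on [t (j - 1), t j); the last step takes the remaining mass\<close>
  shows "(F x - (\<Sum>k<Suc N. (c (Suc k) - c k) * Heaviside (x - t k)))\<^sup>2
    \<le> (F x - Heaviside x)\<^sup>2 * indicator {x. R \<le> \<bar>x\<bar>} x
       + (\<Sum>k<N. (F (t (Suc k)) - F (t k)) * indicator {t k..<t (Suc k)} x)"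
    (is "_ \<le> _ + ?cells")
proof -
  define h where "h = 2 * R / N"
  have "h > 0" using assms by (simp add: h_def)
  define m where "m = nat (\<lfloor>(x + R) / h\<rfloor> + 1)"
  have grid_le_iff: "t k \<le> x \<longleftrightarrow> k < m" for k
  proof -
    have "t k \<le> x \<longleftrightarrow> real k \<le> (x + R) / h"
      using \<open>h > 0\<close> by (simp add: t_def h_def[symmetric] le_divide_eq) linarith
    also have "\<dots> \<longleftrightarrow> k < m"
      unfolding m_def by linarith
    finally show ?thesis .
  qed
  have "c 0 = 0" by (simp add: c_def)
  then have step: "(\<Sum>k<Suc N. (c (Suc k) - c k) * Heaviside (x - t k)) = c (min m (Suc N))"
    using sum_Heaviside_telescope[OF grid_le_iff, of c "Suc N"] by simp
  have F01: "0 \<le> F y" "F y \<le> 1" for y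
    using F by (auto simp: is_CDF_def)
  have F_mono: "y \<le> z \<Longrightarrow> F y \<le> F z" for y z
    using F by (auto simp: is_CDF_def mono_def)
  have t_mono: "i \<le> j \<Longrightarrow> t i \<le> t j" for i j
    using \<open>h > 0\<close> by (simp add: t_def h_def[symmetric] mult_right_mono)
  have F_grid_mono: "F (t k) \<le> F (t (Suc k))" for k
    by (simp add: F_mono t_mono)
  have cells_nonneg: "0 \<le> ?cells"
    by (intro sum_nonneg mult_nonneg_nonneg) (auto simp: F_grid_mono)
  consider "m = 0" | "N < m" | "0 < m" "m \<le> N" by linarith
  then show ?thesis
  proof cases
    case 1
    then have "x < - R" using grid_le_iff[of 0] by (simp add: t_def)
    then show ?thesis using step cells_nonneg 1 \<open>R > 0\<close> by (simp add: c_def Heaviside_def)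
  next
    case 2
    then have "R \<le> x" using grid_le_iff[of N] \<open>N \<ge> 1\<close> by (simp add: t_def)
    then show ?thesis using step cells_nonneg 2 \<open>R > 0\<close> by (simp add: c_def Heaviside_def)
  next
    case 3
    define k where "k = m - 1"
    have "k < N" "Suc k = m" using 3 by (auto simp: k_def)
    then have cell: "t k \<le> x" "x < t (Suc k)" using grid_le_iff[of k] grid_le_iff[of "Suc k"] by auto
    have "(F x - c (min m (Suc N)))\<^sup>2 = (F x - F (t k))\<^sup>2"
      using 3 by (simp add: c_def k_def)
    also have "\<dots> \<le> F (t (Suc k)) - F (t k)"
    proof -
      have "0 \<le> F x - F (t k)" "F x - F (t k) \<le> F (t (Suc k)) - F (t k)"
        using cell by (auto intro: F_mono)
      moreover have "F (t (Suc k)) - F (t k) \<le> 1"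
        using F01[of "t (Suc k)"] F01[of "t k"] by linarith
      ultimately show ?thesis
        by (simp add: power2_eq_square) (smt (verit) mult_left_le)
    qed
    also have "\<dots> = (F (t (Suc k)) - F (t k)) * indicator {t k..<t (Suc k)} x"
      using cell by simp
    also have "\<dots> \<le> ?cells"
      using \<open>k < N\<close> by (intro member_le_sum) (auto simp: F_grid_mono)
    finally have "(F x - c (min m (Suc N)))\<^sup>2 \<le> ?cells" .
    moreover have "0 \<le> (F x - Heaviside x)\<^sup>2 * indicator {x. R \<le> \<bar>x\<bar>} x"
      by simp
    ultimately show ?thesis
      unfolding step by linarith
  qed
qed

lemma L2_CDF_grid_step_approximation:
  fixes F :: "real \<Rightarrow> real" and N :: nat
  assumes F: "F \<in> L2_CDF" and "R > 0" "N \<ge> 1"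
  obtains p t :: "nat \<Rightarrow> real"
  where "\<And>k. k < Suc N \<Longrightarrow> 0 \<le> p k" "(\<Sum>k<Suc N. p k) = 1"
    and "integrable lborel (\<lambda>x. (F x - (\<Sum>k<Suc N. p k * Heaviside (x - t k)))\<^sup>2)"
    and "(LINT x|lborel. (F x - (\<Sum>k<Suc N. p k * Heaviside (x - t k)))\<^sup>2)
      \<le> (LINT x|lborel. (F x - Heaviside x)\<^sup>2 * indicator {x. R \<le> \<bar>x\<bar>} x) + 2 * R / N"
proof -
  have CDF: "is_CDF F" by (rule L2_CDF_is_CDF[OF F])
  have [measurable]: "F \<in> borel_measurable borel" by (rule is_CDF_borel_measurable[OF CDF])
  have F01: "0 \<le> F y" "F y \<le> 1" for y
    using CDF by (auto simp: is_CDF_def)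
  define h where "h = 2 * R / N"
  have "h > 0" using assms by (simp add: h_def)
  define t where "t = (\<lambda>k. - R + real k * h)"
  have t_Suc: "t (Suc k) = t k + h" for k by (simp add: t_def algebra_simps)
  have F_grid_mono: "F (t k) \<le> F (t (Suc k))" for k
    using CDF \<open>h > 0\<close> by (auto simp: is_CDF_def mono_def t_Suc)
  define c where "c = (\<lambda>j. if j = 0 then 0 else if N < j then 1 else F (t (j - 1)))"
  define p where "p k = c (Suc k) - c k" for k
  define cells where "cells x = (\<Sum>k<N. (F (t (Suc k)) - F (t k)) * indicator {t k..<t (Suc k)} x)" for x
  define S where "S x = (\<Sum>k<Suc N. p k * Heaviside (x - t k))" for x
  have "c j \<le> c (Suc j)" for j
    using F01 F_grid_mono[of "j - 1"] by (auto simp: c_def Suc_diff_le)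
  then have p_nonneg: "0 \<le> p k" for k by (simp add: p_def)
  have p_sum: "(\<Sum>k<Suc N. p k) = 1"
    unfolding p_def by (subst sum_lessThan_telescope) (simp add: c_def)
  have cells_integrable: "integrable lborel cells"
    unfolding cells_def
    by (intro Bochner_Integration.integrable_sum integrable_mult_right integrable_real_indicator)
      (use \<open>h > 0\<close> in \<open>auto simp: t_Suc emeasure_lborel_Ico\<close>)
  have "integral\<^sup>L lborel cells = (\<Sum>k<N. (F (t (Suc k)) - F (t k)) * h)"
    unfolding cells_def using \<open>h > 0\<close> by (subst Bochner_Integration.integral_sum) (auto simp: t_Suc)
  also have "\<dots> = (F (t N) - F (t 0)) * h"
    by (simp add: sum_lessThan_telescope[of "\<lambda>k. F (t k)"] flip: sum_distrib_right)
  also have "\<dots> \<le> 2 * R / N"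
    using F01[of "t N"] F01[of "t 0"] \<open>h > 0\<close> mult_right_mono[of _ 1 h] by (simp add: h_def)
  finally have cells_integral: "integral\<^sup>L lborel cells \<le> 2 * R / N" .
  define B where "B x = (F x - Heaviside x)\<^sup>2 * indicator {x. R \<le> \<bar>x\<bar>} x + cells x" for x
  have bound: "(F x - S x)\<^sup>2 \<le> B x" for x
    using CDF_minus_grid_step_le[OF CDF \<open>R > 0\<close> \<open>N \<ge> 1\<close> t_def[unfolded h_def], of x]
    by (simp add: S_def p_def c_def B_def cells_def)
  have tail_integrable:
    "integrable lborel (\<lambda>x. (F x - Heaviside x)\<^sup>2 * indicator {x. R \<le> \<bar>x\<bar>} x)"
    using L2_CDF_integrable[OF F] by (intro integrable_real_mult_indicator) auto
  have B_integrable: "integrable lborel B"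
    unfolding B_def using tail_integrable cells_integrable by auto
  have S_integrable: "integrable lborel (\<lambda>x. (F x - S x)\<^sup>2)"
    by (rule Bochner_Integration.integrable_bound[OF B_integrable])
      (use bound order_trans[OF zero_le_power2 bound] in \<open>auto intro!: AE_I2 simp: S_def\<close>)
  have "(LINT x|lborel. (F x - S x)\<^sup>2) \<le> integral\<^sup>L lborel B"
    by (rule integral_mono'[OF B_integrable bound]) (use bound order_trans[OF zero_le_power2] in blast)
  also have "\<dots> \<le> (LINT x|lborel. (F x - Heaviside x)\<^sup>2 * indicator {x. R \<le> \<bar>x\<bar>} x) + 2 * R / N"
    unfolding B_def using tail_integrable cells_integrable cells_integral by simp
  finally show ?thesis
    using that p_nonneg p_sum S_integrable unfolding S_def by blast
qed

lemma integral_power2_diff_le_twice: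
  fixes f g h :: "real \<Rightarrow> real"
  assumes "integrable lborel (\<lambda>x. (f x - g x)\<^sup>2)" "integrable lborel (\<lambda>x. (g x - h x)\<^sup>2)"
  shows "(LINT x|lborel. (f x - h x)\<^sup>2)
    \<le> 2 * (LINT x|lborel. (f x - g x)\<^sup>2) + 2 * (LINT x|lborel. (g x - h x)\<^sup>2)"
proof -
  have "(LINT x|lborel. (f x - h x)\<^sup>2) \<le> (LINT x|lborel. 2 * (f x - g x)\<^sup>2 + 2 * (g x - h x)\<^sup>2)"
    using assms by (intro integral_mono') (auto intro: power2_diff_le_twice)
  also have "\<dots> = 2 * (LINT x|lborel. (f x - g x)\<^sup>2) + 2 * (LINT x|lborel. (g x - h x)\<^sup>2)"
    using assms by simp
  finally show ?thesis .
qed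

lemma step_mixtures_dense_in_L2_CDF:
  assumes F: "F \<in> L2_CDF" and "\<delta> > 0"
  obtains n :: nat and p t :: "nat \<Rightarrow> real"
  where "\<And>k. k < n \<Longrightarrow> 0 \<le> p k" "(\<Sum>k<n. p k) = 1"
    and "integrable lborel (\<lambda>x. (F x - (\<Sum>k<n. p k * Heaviside (x - t k)))\<^sup>2)"
    and "(LINT x|lborel. (F x - (\<Sum>k<n. p k * Heaviside (x - t k)))\<^sup>2) < \<delta>"
proof -
  have "\<forall>\<^sub>F R in at_top. R > 0 \<and>
      (LINT x|lborel. (F x - Heaviside x)\<^sup>2 * indicator {x. R \<le> \<bar>x\<bar>} x) < \<delta> / 2"
    using integral_tail_tendsto_0[OF L2_CDF_integrable[OF F]] \<open>\<delta> > 0\<close>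
    by (intro eventually_conj eventually_gt_at_top order_tendstoD(2)) auto
  then obtain R where "R > 0"
    and tail: "(LINT x|lborel. (F x - Heaviside x)\<^sup>2 * indicator {x. R \<le> \<bar>x\<bar>} x) < \<delta> / 2"
    by (auto simp: eventually_at_top_linorder)
  obtain N :: nat where N: "4 * R / \<delta> < N" using reals_Archimedean2 by blast
  moreover have "0 < 4 * R / \<delta>" using \<open>R > 0\<close> \<open>\<delta> > 0\<close> by simp
  ultimately have "real N > 0" by linarith
  then have "N \<ge> 1" and mesh: "2 * R / N < \<delta> / 2"
    using N \<open>\<delta> > 0\<close> by (auto simp: field_simps)
  obtain p t where "\<And>k. k < Suc N \<Longrightarrow> 0 \<le> p k" "(\<Sum>k<Suc N. p k) = 1"
    and "integrable lborel (\<lambda>x. (F x - (\<Sum>k<Suc N. p k * Heaviside (x - t k)))\<^sup>2)"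
    and "(LINT x|lborel. (F x - (\<Sum>k<Suc N. p k * Heaviside (x - t k)))\<^sup>2)
      \<le> (LINT x|lborel. (F x - Heaviside x)\<^sup>2 * indicator {x. R \<le> \<bar>x\<bar>} x) + 2 * R / N"
    using L2_CDF_grid_step_approximation[OF F \<open>R > 0\<close> \<open>N \<ge> 1\<close>] by blast
  with tail mesh show ?thesis
    by (intro that[of "Suc N" p t]) auto
qed

lemma gauss_mix_CDFs_dense_in_L2_CDF:
  assumes F: "F \<in> L2_CDF" and "\<epsilon> > 0"
  shows "\<exists>G\<in>gauss_mix_CDFs. l2 F G < \<epsilon>"
proof -
  define \<delta> where "\<delta> = \<epsilon>\<^sup>2 / 4"
  have "\<delta> > 0" using \<open>\<epsilon> > 0\<close> by (simp add: \<delta>_def)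
  obtain n :: nat and p t :: "nat \<Rightarrow> real" where p: "\<And>k. k < n \<Longrightarrow> 0 \<le> p k" "(\<Sum>k<n. p k) = 1"
    and FS: "integrable lborel (\<lambda>x. (F x - (\<Sum>k<n. p k * Heaviside (x - t k)))\<^sup>2)"
      "(LINT x|lborel. (F x - (\<Sum>k<n. p k * Heaviside (x - t k)))\<^sup>2) < \<delta>"
    by (rule step_mixtures_dense_in_L2_CDF[OF F \<open>\<delta> > 0\<close>]) (rule that)
  define C where "C = (LINT x|lborel. (Phi x - Heaviside x)\<^sup>2)"
  define \<sigma> where "\<sigma> = \<delta> / (C + 1)"
  have "C \<ge> 0" by (simp add: C_def)
  then have "\<sigma> > 0" "\<sigma> * C \<le> \<delta>"
    using \<open>\<delta> > 0\<close> by (auto simp: \<sigma>_def field_simps)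
  define S where "S x = (\<Sum>k<n. p k * Heaviside (x - t k))" for x
  define G where "G x = (\<Sum>k<n. p k * Phi ((x - t k) / \<sigma>))" for x
  have "n \<ge> 1" using p(2) by (cases n) auto
  then have "G \<in> gauss_mix_CDFs"
    unfolding gauss_mix_CDFs_def G_def using p \<open>\<sigma> > 0\<close>
    by (intro CollectI exI[of _ n] exI[of _ p] exI[of _ t] exI[of _ "\<lambda>_. \<sigma>"]) auto
  have SG: "integrable lborel (\<lambda>x. (S x - G x)\<^sup>2)" "(LINT x|lborel. (S x - G x)\<^sup>2) \<le> \<sigma> * C"
    using step_mixture_rescale_distance[OF Phi_in_L2_CDF \<open>\<sigma> > 0\<close> finite_lessThan _ p(2), where \<mu> = t] p(1)
    unfolding S_def G_def C_def by auto
  have "(LINT x|lborel. (F x - G x)\<^sup>2) < \<epsilon>\<^sup>2"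
    using integral_power2_diff_le_twice[OF FS(1)[folded S_def] SG(1)] FS(2)[folded S_def] SG(2)
      \<open>\<sigma> * C \<le> \<delta>\<close> by (simp add: \<delta>_def)
  then have "l2 F G < \<epsilon>"
    unfolding l2_def using \<open>\<epsilon> > 0\<close> real_sqrt_less_mono[of _ "\<epsilon>\<^sup>2"] by simp
  with \<open>G \<in> gauss_mix_CDFs\<close> show ?thesis by blast
qed

theorem lemma2:
  shows "gauss_mix_CDFs \<subseteq> L2_CDF \<and>
    (\<forall>F\<in>L2_CDF. \<forall>\<epsilon>>0. \<exists>G\<in>gauss_mix_CDFs. l2 F G < \<epsilon>)"
  using gauss_mix_CDFs_subset_L2_CDF gauss_mix_CDFs_dense_in_L2_CDF by blast

end
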